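(* Let $v$ be bounded, $N\ge2$, $\zeta_l,\zeta_r>0$, and assume $\alpha_{in}^l\alpha_{out}^r-\alpha_{out}^l\alpha_{in}^r>0$. Let $C'=3+\max\{\zeta_l,\zeta_r,1\}$, $\|v\|=\sup_n|v(n)|$, and fix $\epsilon>4\|v\|C'$. Then with $\beta=\epsilon N$, $$\mathcal{J}_{\epsilon N}(N)\ge\frac{4(\alpha_{in}^l\alpha_{out}^r-\alpha_{out}^l\alpha_{in}^r)}{\zeta_l+\zeta_r+\zeta_l\zeta_r\big(\zeta_l+\zeta_r+\epsilon N(N-1)\big)}\left(\frac12-\frac{2\|v\|C'}{\epsilon}\right)>0.$$
   Context: Let $v:\mathbb{N}\to\mathbb{R}$ be bounded, $e_1,\dots,e_N$ the standard basis of $\mathbb{C}^N$, $p_n=|e_n\rangle\langle e_n|$, $h$ the Hermitian matrix $(h\psi)(n)=-\psi(n+1)-\psi(n-1)+v(n)\psi(n)$, $n=1,\dots,N$, $\psi(0)=\psi(N+1)=0$. Let $\alpha_{in}^l,\alpha_{out}^l,\alpha_{in}^r,\alpha_{out}^r\ge0$, $\zeta_l=\alpha_{in}^l+\alpha_{out}^l$, $\zeta_r=\alpha_{in}^r+\alpha_{out}^r$. For $\beta\ge0$ define $l_\beta(a)=-i[h,a]-\{\zeta_lp_1+\zeta_rp_N,a\}+\beta\left(\sum_{n=1}^Np_nap_n-a\right)$ on $M_N(\mathbb{C})$, $R_\infty^{(\beta)}=\int_0^\infty e^{sl_\beta}(2\alpha_{in}^lp_1+2\alpha_{in}^rp_N)\,ds$,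 and $\mathcal{J}_\beta(N)=2\,\mathrm{Im}\langle e_2,R^{(\beta)}_\infty e_1\rangle$. *)

theory Defs
  imports "HOL-Analysis.Analysis"
begin

text \<open>Matrices in M_N(C) are represented as functions nat => nat => complex,
  with 1-based indices 1..N (entries outside {1..N}^2 are irrelevant / zero).
  The standard basis vector e_n corresponds to index n, so
  <e_i, A e_j> = A i j.\<close>

type_synonym cmat = "nat \<Rightarrow> nat \<Rightarrow> complex"

definition mmul :: "nat \<Rightarrow> cmat \<Rightarrow> cmat \<Rightarrow> cmat" where
  "mmul N A B = (\<lambda>i j. \<Sum>k\<in>{1..N}. A i k * B k j)"

text \<open>The Hermitian matrix h: (h psi)(n) = -psi(n+1) - psi(n-1) + v(n) psi(n),
  Dirichlet boundary conditions psi(0) = psi(N+1) = 0.\<close>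
definition hmat :: "nat \<Rightarrow> (nat \<Rightarrow> real) \<Rightarrow> cmat" where
  "hmat N v = (\<lambda>i j. if i \<in> {1..N} \<and> j \<in> {1..N} then
      (if i = j then complex_of_real (v i) else if i = j + 1 \<or> j = i + 1 then -1 else 0)
    else 0)"

definition proj :: "nat \<Rightarrow> cmat" where
  "proj n = (\<lambda>i j. if i = n \<and> j = n then 1 else 0)"

definition lind :: "nat \<Rightarrow> (nat \<Rightarrow> real) \<Rightarrow> real \<Rightarrow> real \<Rightarrow> real \<Rightarrow> cmat \<Rightarrow> cmat" where
  "lind N v zl zr \<beta> a =
    (let H = hmat N v;
         G = (\<lambda>i j. complex_of_real zl * proj 1 i j + complex_of_real zr * proj N i j)
     in (\<lambda>i j. - \<i> * (mmul N H a i j - mmul N a H i j)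
               - (mmul N G a i j + mmul N a G i j)
               + complex_of_real \<beta> *
                   ((\<Sum>n\<in>{1..N}. mmul N (mmul N (proj n) a) (proj n) i j) - a i j)))"

definition expL :: "nat \<Rightarrow> (nat \<Rightarrow> real) \<Rightarrow> real \<Rightarrow> real \<Rightarrow> real \<Rightarrow> real \<Rightarrow> cmat \<Rightarrow> cmat" where
  "expL N v zl zr \<beta> s a =
    (\<lambda>i j. \<Sum>k. complex_of_real (s ^ k / fact k) * ((lind N v zl zr \<beta> ^^ k) a i j))"

definition Rinf :: "nat \<Rightarrow> (nat \<Rightarrow> real) \<Rightarrow> real \<Rightarrow> real \<Rightarrow> real \<Rightarrow> real \<Rightarrow> real \<Rightarrow> cmat" where
  "Rinf N v ail aol air aor \<beta> =
    (let zl = ail + aol; zr = air + aor;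
         a0 = (\<lambda>i j. complex_of_real (2 * ail) * proj 1 i j + complex_of_real (2 * air) * proj N i j)
     in (\<lambda>i j. integral {0..} (\<lambda>s. expL N v zl zr \<beta> s a0 i j)))"

definition Jcur :: "nat \<Rightarrow> (nat \<Rightarrow> real) \<Rightarrow> real \<Rightarrow> real \<Rightarrow> real \<Rightarrow> real \<Rightarrow> real \<Rightarrow> real" where
  "Jcur N v ail aol air aor \<beta> = 2 * Im (Rinf N v ail aol air aor \<beta> 2 1)"

definition vnorm :: "(nat \<Rightarrow> real) \<Rightarrow> real" where
  "vnorm v = (SUP n\<in>{1..}. \<bar>v n\<bar>)"

end

theory Submission
  imports Defs
begin

text \<open>
  The generator L is dissipative: Re <a, L a> = - D(a), where D(a) collects the boundary losses
  and beta times the off-diagonal mass of a. For beta > 0 the dissipation of a together with that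
  of L a bounds the Frobenius norm of a, because the off-diagonal entries of L a link neighbouring
  diagonal entries of a. Hence e^{sL} decays exponentially, the integral R_infty converges, and
  L R_infty = - a_0 for the injected density a_0. Without potential this equation is solved by an
  explicit tridiagonal matrix R_0 whose bonds carry the current
  J = 2 (a_in^l a_out^r - a_out^l a_in^r) / (z_l + z_r + z_l z_r (z_l + z_r + beta (N - 1))).
  With potential, X = R_infty - R_0 solves
  L X = - i [v, R_0], an off-diagonal matrix of Frobenius norm at most sqrt (2 N) ||v|| J, and
  dissipativity gives beta |X_21| <= sqrt (2 N) ||v|| J. For beta = epsilon N this changes
  2 Im R_21 by at most 2 ||v|| J / epsilon.
\<close>

section \<open>The generator entrywise\<close>

definition boundary_rate :: "nat \<Rightarrow> real \<Rightarrow> real \<Rightarrow> nat \<Rightarrow> real" where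
  "boundary_rate N zl zr i = (if i = 1 then zl else 0) + (if i = N then zr else 0)"

lemma boundary_mat_eq_diag:
  "(\<lambda>i j. complex_of_real zl * proj 1 i j + complex_of_real zr * proj N i j)
     = (\<lambda>i j. if i = j then complex_of_real (boundary_rate N zl zr i) else 0)"
  by (auto simp: fun_eq_iff proj_def boundary_rate_def)

lemma mmul_diag_left:
  "i \<in> {1..N} \<Longrightarrow> mmul N (\<lambda>i j. if i = j then d i else 0) a i j = d i * a i j"
  by (simp add: mmul_def if_distrib if_distribR cong: if_cong)

lemma mmul_diag_right:
  "j \<in> {1..N} \<Longrightarrow> mmul N a (\<lambda>i j. if i = j then d i else 0) i j = a i j * d j"
  by (simp add: mmul_def if_distrib if_distribR cong: if_cong)

lemma proj_eq_diag: "proj n = (\<lambda>i j. if i = j then (if i = n then 1 else 0) else 0)"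
  by (auto simp: fun_eq_iff proj_def)

lemma sum_dephase:
  assumes "i \<in> {1..N}" "j \<in> {1..N}"
  shows "(\<Sum>n\<in>{1..N}. mmul N (mmul N (proj n) a) (proj n) i j) = (if i = j then a i i else 0)"
proof -
  have "mmul N (mmul N (proj n) a) (proj n) i j = (if i = n \<and> j = n then a i j else 0)" for n
    using assms unfolding proj_eq_diag
    by (simp add: mmul_diag_right[OF assms(2)] mmul_diag_left[OF assms(1)])
  then have "(\<Sum>n\<in>{1..N}. mmul N (mmul N (proj n) a) (proj n) i j)
      = (\<Sum>n\<in>{1..N}. if n = i then (if i = j then a i j else 0) else 0)"
    by (intro sum.cong) auto
  then show ?thesis using assms by simp
qed

lemma lind_entry:
  assumes "i \<in> {1..N}" "j \<in> {1..N}"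
  shows "lind N v zl zr \<beta> a i j = - \<i> * (mmul N (hmat N v) a i j - mmul N a (hmat N v) i j)
     - complex_of_real (boundary_rate N zl zr i + boundary_rate N zl zr j) * a i j
     + complex_of_real \<beta> * ((if i = j then a i i else 0) - a i j)"
  unfolding lind_def Let_def boundary_mat_eq_diag
  by (simp only: mmul_diag_left[OF assms(1)] mmul_diag_right[OF assms(2)] sum_dephase[OF assms])
    (simp add: algebra_simps)

lemma mmul_hmat_left:
  assumes "i \<in> {1..N}"
  shows "mmul N (hmat N v) a i j = complex_of_real (v i) * a i j
     - (if 2 \<le> i then a (i-1) j else 0) - (if i+1 \<le> N then a (i+1) j else 0)"
proof -
  have "mmul N (hmat N v) a i j = (\<Sum>k\<in>{1..N}. (if k = i then complex_of_real (v i) * a k j else 0)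
       + (if 2 \<le> i then (if k = i - 1 then - a k j else 0) else 0)
       + (if k = i + 1 then - a k j else 0))"
    unfolding mmul_def using assms by (intro sum.cong refl) (auto simp: hmat_def)
  then show ?thesis using assms by (auto simp: sum.distrib)
qed

lemma mmul_hmat_right:
  assumes "j \<in> {1..N}"
  shows "mmul N a (hmat N v) i j = a i j * complex_of_real (v j)
     - (if 2 \<le> j then a i (j-1) else 0) - (if j+1 \<le> N then a i (j+1) else 0)"
proof -
  have "mmul N a (hmat N v) i j = (\<Sum>k\<in>{1..N}. (if k = j then a i k * complex_of_real (v j) else 0)
       + (if 2 \<le> j then (if k = j - 1 then - a i k else 0) else 0)
       + (if k = j + 1 then - a i k else 0))"
    unfolding mmul_def using assms by (intro sum.cong refl) (auto simp: hmat_def)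
  then show ?thesis using assms by (auto simp: sum.distrib)
qed

lemma lind_potential_split:
  assumes "i \<in> {1..N}" "j \<in> {1..N}"
  shows "lind N v zl zr \<beta> a i j = lind N (\<lambda>_. 0) zl zr \<beta> a i j - \<i> * complex_of_real (v i - v j) * a i j"
  unfolding lind_entry[OF assms] mmul_hmat_left[OF assms(1)] mmul_hmat_right[OF assms(2)]
  by (simp add: algebra_simps)

lemma hmat_hermitian: "cnj (hmat N v i k) = hmat N v k i"
  by (auto simp: hmat_def)

lemma hmat_entry_bound: "cmod (hmat N v i k) \<le> 1 + (\<Sum>n\<in>{1..N}. \<bar>v n\<bar>)"
proof -
  have "\<bar>v i\<bar> \<le> (\<Sum>n\<in>{1..N}. \<bar>v n\<bar>)" if "i \<in> {1..N}"
    using member_le_sum[of i "{1..N}" "\<lambda>n. \<bar>v n\<bar>"] that by auto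
  moreover have "0 \<le> (\<Sum>n\<in>{1..N}. \<bar>v n\<bar>)" by (simp add: sum_nonneg)
  ultimately show ?thesis unfolding hmat_def by auto
qed

lemma lind_add:
  assumes "i \<in> {1..N}" "j \<in> {1..N}"
  shows "lind N v zl zr \<beta> (\<lambda>i j. a i j + b i j) i j = lind N v zl zr \<beta> a i j + lind N v zl zr \<beta> b i j"
  unfolding lind_entry[OF assms] mmul_def by (simp add: algebra_simps sum.distrib)

lemma lind_diff:
  assumes "i \<in> {1..N}" "j \<in> {1..N}"
  shows "lind N v zl zr \<beta> (\<lambda>i j. a i j - b i j) i j = lind N v zl zr \<beta> a i j - lind N v zl zr \<beta> b i j"
  unfolding lind_entry[OF assms] mmul_def by (simp add: algebra_simps sum_subtractf)

lemma lind_scale: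
  assumes "i \<in> {1..N}" "j \<in> {1..N}"
  shows "lind N v zl zr \<beta> (\<lambda>i j. c * a i j) i j = c * lind N v zl zr \<beta> a i j"
  unfolding lind_entry[OF assms] mmul_def by (simp add: algebra_simps sum_distrib_left)

lemma lind_cong:
  assumes "i \<in> {1..N}" "j \<in> {1..N}" "\<And>i j. i \<in> {1..N} \<Longrightarrow> j \<in> {1..N} \<Longrightarrow> a i j = b i j"
  shows "lind N v zl zr \<beta> a i j = lind N v zl zr \<beta> b i j"
  unfolding lind_entry[OF assms(1,2)] mmul_def using assms by simp

lemma lind_sum:
  assumes "i \<in> {1..N}" "j \<in> {1..N}" "finite S"
  shows "lind N v zl zr \<beta> (\<lambda>i j. \<Sum>x\<in>S. f x i j) i j = (\<Sum>x\<in>S. lind N v zl zr \<beta> (f x) i j)"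
  using assms(3)
proof (induction S rule: finite_induct)
  case empty
  then show ?case using lind_scale[OF assms(1,2), where c=0] by simp
next
  case (insert x F)
  then show ?case by (simp add: lind_add[OF assms(1,2)])
qed

definition unit_mat :: "nat \<Rightarrow> nat \<Rightarrow> cmat" where
  "unit_mat k m = (\<lambda>i j. if i = k \<and> j = m then 1 else 0)"

lemma lind_unit_mat_expansion:
  assumes "i \<in> {1..N}" "j \<in> {1..N}"
  shows "lind N v zl zr \<beta> a i j = (\<Sum>k\<in>{1..N}. \<Sum>m\<in>{1..N}. a k m * lind N v zl zr \<beta> (unit_mat k m) i j)"
proof -
  have "lind N v zl zr \<beta> a i j
      = lind N v zl zr \<beta> (\<lambda>i j. \<Sum>k\<in>{1..N}. \<Sum>m\<in>{1..N}. a k m * unit_mat k m i j) i j"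
  proof (rule lind_cong[OF assms])
    fix i j assume "i \<in> {1..N}" "j \<in> {1..N}"
    then have "(\<Sum>k\<in>{1..N}. \<Sum>m\<in>{1..N}. a k m * unit_mat k m i j)
        = (\<Sum>k\<in>{1..N}. if k = i then (\<Sum>m\<in>{1..N}. if m = j then a k m else 0) else 0)"
      by (intro sum.cong) (auto simp: unit_mat_def if_distrib cong: if_cong)
    with \<open>i \<in> {1..N}\<close> \<open>j \<in> {1..N}\<close>
    show "a i j = (\<Sum>k\<in>{1..N}. \<Sum>m\<in>{1..N}. a k m * unit_mat k m i j)"
      by simp
  qed
  also have "\<dots> = (\<Sum>k\<in>{1..N}. \<Sum>m\<in>{1..N}. a k m * lind N v zl zr \<beta> (unit_mat k m) i j)"
    by (simp add: lind_sum[OF assms] lind_scale[OF assms])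
  finally show ?thesis .
qed

lemma lind_suminf:
  assumes ij: "i \<in> {1..N}" "j \<in> {1..N}"
    and sm: "\<And>k m. k \<in> {1..N} \<Longrightarrow> m \<in> {1..N} \<Longrightarrow> summable (\<lambda>n. f n k m)"
  shows "lind N v zl zr \<beta> (\<lambda>k m. \<Sum>n. f n k m) i j = (\<Sum>n. lind N v zl zr \<beta> (f n) i j)"
proof -
  let ?w = "\<lambda>k m. lind N v zl zr \<beta> (unit_mat k m) i j"
  have "lind N v zl zr \<beta> (\<lambda>k m. \<Sum>n. f n k m) i j = (\<Sum>k\<in>{1..N}. \<Sum>m\<in>{1..N}. \<Sum>n. f n k m * ?w k m)"
    unfolding lind_unit_mat_expansion[OF ij, of v zl zr \<beta> "\<lambda>k m. \<Sum>n. f n k m"]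
    by (intro sum.cong refl suminf_mult2 sm) auto
  also have "\<dots> = (\<Sum>k\<in>{1..N}. \<Sum>n. \<Sum>m\<in>{1..N}. f n k m * ?w k m)"
    by (intro sum.cong refl suminf_sum[symmetric] summable_mult2 sm) auto
  also have "\<dots> = (\<Sum>n. \<Sum>k\<in>{1..N}. \<Sum>m\<in>{1..N}. f n k m * ?w k m)"
    by (intro suminf_sum[symmetric] summable_sum summable_mult2 sm) auto
  also have "\<dots> = (\<Sum>n. lind N v zl zr \<beta> (f n) i j)"
    by (intro suminf_cong lind_unit_mat_expansion[OF ij, symmetric])
  finally show ?thesis .
qed

lemma lind_integral:
  assumes ij: "i \<in> {1..N}" "j \<in> {1..N}"
    and "\<And>k m. k \<in> {1..N} \<Longrightarrow> m \<in> {1..N} \<Longrightarrow> (\<lambda>s. f s k m) integrable_on S"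
  shows "lind N v zl zr \<beta> (\<lambda>k m. integral S (\<lambda>s. f s k m)) i j = integral S (\<lambda>s. lind N v zl zr \<beta> (f s) i j)"
proof -
  let ?w = "\<lambda>k m. lind N v zl zr \<beta> (unit_mat k m) i j"
  have "lind N v zl zr \<beta> (\<lambda>k m. integral S (\<lambda>s. f s k m)) i j
      = (\<Sum>k\<in>{1..N}. \<Sum>m\<in>{1..N}. integral S (\<lambda>s. f s k m * ?w k m))"
    unfolding lind_unit_mat_expansion[OF ij, of v zl zr \<beta> "\<lambda>k m. integral S (\<lambda>s. f s k m)"]
    by (intro sum.cong refl integral_mult_left assms) auto
  also have "\<dots> = integral S (\<lambda>s. \<Sum>k\<in>{1..N}. \<Sum>m\<in>{1..N}. f s k m * ?w k m)"
    by (subst integral_sum, auto intro!: integrable_sum integrable_on_mult_left assms,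
        intro sum.cong refl, subst integral_sum, auto intro!: integrable_on_mult_left assms)
  also have "\<dots> = integral S (\<lambda>s. lind N v zl zr \<beta> (f s) i j)"
    by (intro integral_cong lind_unit_mat_expansion[OF ij, symmetric])
  finally show ?thesis .
qed

lemma lind_has_vector_derivative:
  assumes ij: "i \<in> {1..N}" "j \<in> {1..N}"
    and "\<And>k m. k \<in> {1..N} \<Longrightarrow> m \<in> {1..N} \<Longrightarrow> ((\<lambda>s. f s k m) has_vector_derivative f' k m) F"
  shows "((\<lambda>s. lind N v zl zr \<beta> (f s) i j) has_vector_derivative lind N v zl zr \<beta> f' i j) F"
proof -
  let ?w = "\<lambda>k m. lind N v zl zr \<beta> (unit_mat k m) i j"
  have "((\<lambda>s. \<Sum>k\<in>{1..N}. \<Sum>m\<in>{1..N}. f s k m * ?w k m) has_vector_derivative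
      (\<Sum>k\<in>{1..N}. \<Sum>m\<in>{1..N}. f' k m * ?w k m)) F"
    by (intro has_vector_derivative_sum has_vector_derivative_mult_left assms) auto
  then show ?thesis by (simp only: lind_unit_mat_expansion[OF ij, symmetric])
qed

section \<open>Dissipativity\<close>

definition frob_sq :: "nat \<Rightarrow> cmat \<Rightarrow> real" where
  "frob_sq N a = (\<Sum>i\<in>{1..N}. \<Sum>j\<in>{1..N}. (cmod (a i j))\<^sup>2)"

definition offdiag_sq :: "nat \<Rightarrow> cmat \<Rightarrow> real" where
  "offdiag_sq N a = (\<Sum>i\<in>{1..N}. \<Sum>j\<in>{1..N}. if i = j then 0 else (cmod (a i j))\<^sup>2)"

definition frob_inner :: "nat \<Rightarrow> cmat \<Rightarrow> cmat \<Rightarrow> complex" where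
  "frob_inner N a b = (\<Sum>i\<in>{1..N}. \<Sum>j\<in>{1..N}. cnj (a i j) * b i j)"

definition dissipation :: "nat \<Rightarrow> real \<Rightarrow> real \<Rightarrow> real \<Rightarrow> cmat \<Rightarrow> real" where
  "dissipation N zl zr \<beta> a =
     (\<Sum>i\<in>{1..N}. \<Sum>j\<in>{1..N}. (boundary_rate N zl zr i + boundary_rate N zl zr j) * (cmod (a i j))\<^sup>2)
     + \<beta> * offdiag_sq N a"

lemma frob_sq_nonneg: "frob_sq N a \<ge> 0"
  unfolding frob_sq_def by (intro sum_nonneg) auto

lemma offdiag_sq_nonneg: "offdiag_sq N a \<ge> 0"
  unfolding offdiag_sq_def by (intro sum_nonneg) auto

lemma entry_sq_le_frob_sq:
  assumes "i \<in> {1..N}" "j \<in> {1..N}"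
  shows "(cmod (a i j))\<^sup>2 \<le> frob_sq N a"
proof -
  have "(cmod (a i j))\<^sup>2 \<le> (\<Sum>j\<in>{1..N}. (cmod (a i j))\<^sup>2)"
    using assms by (intro member_le_sum) auto
  also have "\<dots> \<le> frob_sq N a"
    unfolding frob_sq_def using assms by (intro member_le_sum sum_nonneg) auto
  finally show ?thesis .
qed

lemma offdiag_entry_sq_le_offdiag_sq:
  assumes "i \<in> {1..N}" "j \<in> {1..N}" "i \<noteq> j"
  shows "(cmod (a i j))\<^sup>2 \<le> offdiag_sq N a"
proof -
  have "(cmod (a i j))\<^sup>2 \<le> (\<Sum>j\<in>{1..N}. if i = j then 0 else (cmod (a i j))\<^sup>2)"
    using member_le_sum[of j "{1..N}" "\<lambda>j. if i = j then 0 else (cmod (a i j))\<^sup>2"] assms by auto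
  also have "\<dots> \<le> offdiag_sq N a"
    unfolding offdiag_sq_def using assms by (intro member_le_sum sum_nonneg) auto
  finally show ?thesis .
qed

lemma entry_le_sqrt_frob_sq:
  "i \<in> {1..N} \<Longrightarrow> j \<in> {1..N} \<Longrightarrow> cmod (a i j) \<le> sqrt (frob_sq N a)"
  using entry_sq_le_frob_sq real_le_rsqrt by blast

lemma offdiag_entry_le_sqrt_offdiag_sq:
  "i \<in> {1..N} \<Longrightarrow> j \<in> {1..N} \<Longrightarrow> i \<noteq> j \<Longrightarrow> cmod (a i j) \<le> sqrt (offdiag_sq N a)"
  using offdiag_entry_sq_le_offdiag_sq real_le_rsqrt by blast

lemma frob_sq_split: "frob_sq N a = offdiag_sq N a + (\<Sum>n\<in>{1..N}. (cmod (a n n))\<^sup>2)"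
proof -
  have "(\<Sum>j\<in>{1..N}. (cmod (a i j))\<^sup>2)
      = (\<Sum>j\<in>{1..N}. if i = j then 0 else (cmod (a i j))\<^sup>2) + (\<Sum>j\<in>{1..N}. if i = j then (cmod (a i j))\<^sup>2 else 0)"
    for i by (subst sum.distrib[symmetric]) (intro sum.cong, auto)
  moreover have "(\<Sum>j\<in>{1..N}. if i = j then (cmod (a i j))\<^sup>2 else 0) = (if i \<in> {1..N} then (cmod (a i i))\<^sup>2 else 0)"
    for i by (simp add: sum.delta)
  ultimately show ?thesis
    unfolding frob_sq_def offdiag_sq_def by (simp add: sum.distrib)
qed

lemma Im_frob_inner_hermitian_left:
  assumes "\<And>i k. cnj (H i k) = H k i"
  shows "Im (frob_inner N a (mmul N H a)) = 0"
proof -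
  define f where "f i j k = cnj (a i j) * H i k * a k j" for i j k
  let ?S = "\<Sum>i\<in>{1..N}. \<Sum>j\<in>{1..N}. \<Sum>k\<in>{1..N}. f i j k"
  have S: "frob_inner N a (mmul N H a) = ?S"
    by (simp add: frob_inner_def mmul_def sum_distrib_left f_def mult.assoc)
  have "cnj ?S = (\<Sum>i\<in>{1..N}. \<Sum>j\<in>{1..N}. \<Sum>k\<in>{1..N}. f k j i)"
    by (simp add: cnj_sum f_def assms ac_simps)
  also have "\<dots> = (\<Sum>i\<in>{1..N}. \<Sum>k\<in>{1..N}. \<Sum>j\<in>{1..N}. f k j i)"
    by (intro sum.cong refl sum.swap)
  also have "\<dots> = (\<Sum>k\<in>{1..N}. \<Sum>i\<in>{1..N}. \<Sum>j\<in>{1..N}. f k j i)"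
    by (rule sum.swap)
  also have "\<dots> = ?S"
    by (intro sum.cong refl sum.swap)
  finally show ?thesis unfolding S by (metis Im_complex_of_real Reals_cnj_iff complex_is_Real_iff)
qed

lemma Im_frob_inner_hermitian_right:
  assumes "\<And>i k. cnj (H i k) = H k i"
  shows "Im (frob_inner N a (mmul N a H)) = 0"
proof -
  define f where "f i j k = cnj (a i j) * a i k * H k j" for i j k
  let ?S = "\<Sum>i\<in>{1..N}. \<Sum>j\<in>{1..N}. \<Sum>k\<in>{1..N}. f i j k"
  have S: "frob_inner N a (mmul N a H) = ?S"
    by (simp add: frob_inner_def mmul_def sum_distrib_left f_def mult.assoc)
  have "cnj ?S = (\<Sum>i\<in>{1..N}. \<Sum>j\<in>{1..N}. \<Sum>k\<in>{1..N}. f i k j)"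
    by (simp add: cnj_sum f_def assms ac_simps)
  also have "\<dots> = ?S"
    by (intro sum.cong refl sum.swap)
  finally show ?thesis unfolding S by (metis Im_complex_of_real Reals_cnj_iff complex_is_Real_iff)
qed

lemma Re_frob_inner_lind: "Re (frob_inner N a (lind N v zl zr \<beta> a)) = - dissipation N zl zr \<beta> a"
proof -
  let ?g = "\<lambda>i. boundary_rate N zl zr i"
  let ?HA = "mmul N (hmat N v) a" and ?AH = "mmul N a (hmat N v)"
  have entry: "cnj (a i j) * lind N v zl zr \<beta> a i j =
      - \<i> * (cnj (a i j) * ?HA i j) + \<i> * (cnj (a i j) * ?AH i j)
      - complex_of_real ((?g i + ?g j) * (cmod (a i j))\<^sup>2)
      - complex_of_real (\<beta> * (if i = j then 0 else (cmod (a i j))\<^sup>2))"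
    if "i \<in> {1..N}" "j \<in> {1..N}" for i j
  proof -
    have "(complex_of_real (cmod (a i j)))\<^sup>2 = a i j * cnj (a i j)"
      using complex_norm_square[of "a i j"] by simp
    then show ?thesis unfolding lind_entry[OF that] by (auto simp: algebra_simps)
  qed
  have "Re (frob_inner N a (lind N v zl zr \<beta> a))
      = Im (frob_inner N a ?HA) - Im (frob_inner N a ?AH) - dissipation N zl zr \<beta> a"
    unfolding frob_inner_def dissipation_def offdiag_sq_def
    by (simp add: Re_sum Im_sum entry sum_subtractf sum.distrib sum_distrib_left)
  then show ?thesis
    using Im_frob_inner_hermitian_left[OF hmat_hermitian] Im_frob_inner_hermitian_right[OF hmat_hermitian]
    by simp
qed

lemma boundary_rate_nonneg: "zl \<ge> 0 \<Longrightarrow> zr \<ge> 0 \<Longrightarrow> boundary_rate N zl zr i \<ge> 0"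
  by (simp add: boundary_rate_def)

lemma boundary_rate_le: "zl \<ge> 0 \<Longrightarrow> zr \<ge> 0 \<Longrightarrow> boundary_rate N zl zr i \<le> zl + zr"
  by (simp add: boundary_rate_def)

lemma dissipation_ge_offdiag:
  assumes "zl \<ge> 0" "zr \<ge> 0"
  shows "\<beta> * offdiag_sq N a \<le> dissipation N zl zr \<beta> a"
  unfolding dissipation_def using boundary_rate_nonneg[OF assms]
  by (simp add: sum_nonneg)

lemma dissipation_ge_corner:
  assumes "zl \<ge> 0" "zr \<ge> 0" "\<beta> \<ge> 0" "N \<ge> 1"
  shows "2 * zl * (cmod (a 1 1))\<^sup>2 \<le> dissipation N zl zr \<beta> a"
proof -
  let ?f = "\<lambda>i j. (boundary_rate N zl zr i + boundary_rate N zl zr j) * (cmod (a i j))\<^sup>2"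
  have nonneg: "0 \<le> ?f i j" for i j
    using boundary_rate_nonneg[OF assms(1,2)] by (simp add: add_nonneg_nonneg)
  have "2 * zl * (cmod (a 1 1))\<^sup>2 \<le> ?f 1 1"
    using assms by (auto simp: boundary_rate_def intro!: mult_right_mono)
  also have "\<dots> \<le> (\<Sum>j\<in>{1..N}. ?f 1 j)"
    using assms by (intro member_le_sum nonneg) auto
  also have "\<dots> \<le> (\<Sum>i\<in>{1..N}. \<Sum>j\<in>{1..N}. ?f i j)"
    using assms by (intro member_le_sum[of 1 "{1..N}" "\<lambda>i. \<Sum>j\<in>{1..N}. ?f i j"] sum_nonneg nonneg) auto
  finally show ?thesis
    unfolding dissipation_def using assms offdiag_sq_nonneg[of N a]
    by (smt (verit) mult_nonneg_nonneg)
qed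

lemma dissipation_nonneg: "zl \<ge> 0 \<Longrightarrow> zr \<ge> 0 \<Longrightarrow> \<beta> \<ge> 0 \<Longrightarrow> dissipation N zl zr \<beta> a \<ge> 0"
  using dissipation_ge_offdiag[of zl zr \<beta> N a] offdiag_sq_nonneg[of N a] by (smt (verit) mult_nonneg_nonneg)

section \<open>Coercivity\<close>

lemma norm_sum_offdiag_le:
  assumes "B \<ge> 0" "\<And>k. k \<in> {1..N} - {j} \<Longrightarrow> cmod (h k) \<le> B"
    and "\<And>k. k \<in> {1..N} - {j} \<Longrightarrow> cmod (x k) \<le> sqrt (offdiag_sq N a)"
  shows "cmod (\<Sum>k\<in>{1..N} - {j}. h k * x k) \<le> real N * B * sqrt (offdiag_sq N a)"
proof -
  have "cmod (\<Sum>k\<in>{1..N} - {j}. h k * x k) \<le> (\<Sum>k\<in>{1..N} - {j}. B * sqrt (offdiag_sq N a))"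
    using assms by (intro sum_norm_le) (simp add: norm_mult mult_mono)
  also have "\<dots> \<le> real N * (B * sqrt (offdiag_sq N a))"
    using assms(1) card_Diff1_le[of "{1..N}" j]
    by (auto intro!: mult_right_mono simp: offdiag_sq_nonneg)
  finally show ?thesis by (simp add: mult.assoc)
qed

text \<open>The hopping term puts a (n+1) (n+1) - a n n into the entry (n+1, n) of L a; everything else
  in that entry is off-diagonal.\<close>

lemma diag_step_bound:
  assumes n: "1 \<le> n" "n + 1 \<le> N" and "zl \<ge> 0" "zr \<ge> 0" "\<beta> \<ge> 0"
    and B: "\<And>i k. cmod (hmat N v i k) \<le> B"
  shows "cmod (a (n+1) (n+1) - a n n)
    \<le> sqrt (offdiag_sq N (lind N v zl zr \<beta> a)) + (2 * real N * B + 2 * (zl + zr) + \<beta>) * sqrt (offdiag_sq N a)"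
proof -
  define i where "i = n + 1"
  have i: "i \<in> {1..N}" and j: "n \<in> {1..N}" and ij: "i \<noteq> n" using n by (auto simp: i_def)
  have B0: "B \<ge> 0" using B[of i n] norm_ge_zero order_trans by blast
  define P where "P = (\<Sum>k\<in>{1..N} - {n}. hmat N v i k * a k n)"
  define Q where "Q = (\<Sum>k\<in>{1..N} - {i}. hmat N v k n * a i k)"
  define c where "c = boundary_rate N zl zr i + boundary_rate N zl zr n + \<beta>"
  have "hmat N v i n = -1" using i j by (simp add: hmat_def i_def)
  moreover have "hmat N v i n = hmat N v n i" by (auto simp: hmat_def)
  ultimately have M: "mmul N (hmat N v) a i n = - a n n + P" "mmul N a (hmat N v) i n = - a i i + Q"
    unfolding mmul_def P_def Q_def
    by (subst sum.remove[OF _ j], simp, simp add: mult.commute,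
        subst sum.remove[OF _ i], simp, simp add: mult.commute)
  have L: "lind N v zl zr \<beta> a i n = - \<i> * (a i i - a n n + P - Q) - complex_of_real c * a i n"
    unfolding lind_entry[OF i j] c_def M using ij by (simp add: algebra_simps)
  have eq: "a i i - a n n = \<i> * lind N v zl zr \<beta> a i n + \<i> * complex_of_real c * a i n - P + Q"
    unfolding L by (simp add: algebra_simps)
  have "cmod (a i i - a n n) \<le> cmod (\<i> * lind N v zl zr \<beta> a i n) + cmod (\<i> * complex_of_real c * a i n) + cmod P + cmod Q"
    unfolding eq by (smt (verit) norm_triangle_ineq norm_triangle_ineq4)
  also have "\<dots> = cmod (lind N v zl zr \<beta> a i n) + \<bar>c\<bar> * cmod (a i n) + cmod P + cmod Q"
    by (simp add: norm_mult)
  also have "\<dots> \<le> sqrt (offdiag_sq N (lind N v zl zr \<beta> a)) + (2 * (zl + zr) + \<beta>) * sqrt (offdiag_sq N a)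
       + real N * B * sqrt (offdiag_sq N a) + real N * B * sqrt (offdiag_sq N a)"
  proof (intro add_mono)
    show "cmod (lind N v zl zr \<beta> a i n) \<le> sqrt (offdiag_sq N (lind N v zl zr \<beta> a))"
      by (rule offdiag_entry_le_sqrt_offdiag_sq[OF i j ij])
    have "\<bar>c\<bar> \<le> 2 * (zl + zr) + \<beta>"
      using assms boundary_rate_nonneg boundary_rate_le unfolding c_def
      by (smt (verit, best))
    then show "\<bar>c\<bar> * cmod (a i n) \<le> (2 * (zl + zr) + \<beta>) * sqrt (offdiag_sq N a)"
      by (intro mult_mono offdiag_entry_le_sqrt_offdiag_sq[OF i j ij]) auto
    show "cmod P \<le> real N * B * sqrt (offdiag_sq N a)"
      unfolding P_def using j by (intro norm_sum_offdiag_le[OF B0 B] offdiag_entry_le_sqrt_offdiag_sq) auto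
    show "cmod Q \<le> real N * B * sqrt (offdiag_sq N a)"
      unfolding Q_def using i by (intro norm_sum_offdiag_le[OF B0 B] offdiag_entry_le_sqrt_offdiag_sq) auto
  qed
  finally show ?thesis by (simp add: i_def algebra_simps)
qed

lemma diag_entry_bound:
  assumes "zl \<ge> 0" "zr \<ge> 0" "\<beta> \<ge> 0" "\<And>i k. cmod (hmat N v i k) \<le> B" "n \<in> {1..N}"
  shows "cmod (a n n) \<le> cmod (a 1 1) + real N *
    (sqrt (offdiag_sq N (lind N v zl zr \<beta> a)) + (2 * real N * B + 2 * (zl + zr) + \<beta>) * sqrt (offdiag_sq N a))"
proof -
  let ?S = "sqrt (offdiag_sq N (lind N v zl zr \<beta> a)) + (2 * real N * B + 2 * (zl + zr) + \<beta>) * sqrt (offdiag_sq N a)"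
  have "cmod (a (m+1) (m+1)) \<le> cmod (a 1 1) + real m * ?S" if "m + 1 \<le> N" for m
    using that
  proof (induction m)
    case (Suc m)
    have "cmod (a (m+2) (m+2)) \<le> cmod (a (m+1) (m+1)) + cmod (a (m+2) (m+2) - a (m+1) (m+1))"
      by (metis norm_triangle_ineq add.commute diff_add_cancel)
    also have "cmod (a (m+2) (m+2) - a (m+1) (m+1)) \<le> ?S"
      using diag_step_bound[of "m+1" N zl zr \<beta> v B a] assms Suc.prems by (simp add: add.commute)
    finally show ?case using Suc by (simp add: algebra_simps)
  qed simp
  moreover have "?S \<ge> 0"
    using assms(1-3) order_trans[OF norm_ge_zero assms(4)[of 1 1]]
    by (intro add_nonneg_nonneg mult_nonneg_nonneg) (auto simp: offdiag_sq_nonneg)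
  moreover obtain m where "n = m + 1" "m + 1 \<le> N"
    using assms(5) by (metis atLeastAtMost_iff le_add_diff_inverse2)
  ultimately show ?thesis
    by (smt (verit, best) mult_right_mono of_nat_le_iff le_add1 order_trans)
qed

lemma diag_sq_sum_bound:
  assumes "zl \<ge> 0" "zr \<ge> 0" "\<beta> \<ge> 0" "\<And>i k. cmod (hmat N v i k) \<le> B"
  defines "Q \<equiv> 2 * real N * B + 2 * (zl + zr) + \<beta>"
  shows "(\<Sum>n\<in>{1..N}. (cmod (a n n))\<^sup>2) \<le> 2 * real N * (cmod (a 1 1))\<^sup>2
    + 4 * real N ^ 3 * offdiag_sq N (lind N v zl zr \<beta> a) + 4 * real N ^ 3 * Q\<^sup>2 * offdiag_sq N a"
proof -
  let ?la = "lind N v zl zr \<beta> a"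
  define S where "S = sqrt (offdiag_sq N ?la) + Q * sqrt (offdiag_sq N a)"
  define x where "x = cmod (a 1 1)"
  have "S\<^sup>2 \<le> 2 * (sqrt (offdiag_sq N ?la))\<^sup>2 + 2 * (Q * sqrt (offdiag_sq N a))\<^sup>2"
    unfolding S_def by (smt (verit) power2_sum sum_squares_ge_zero power2_diff zero_le_power2)
  then have S2: "S\<^sup>2 \<le> 2 * offdiag_sq N ?la + 2 * Q\<^sup>2 * offdiag_sq N a"
    by (simp add: power_mult_distrib offdiag_sq_nonneg)
  have "(cmod (a n n))\<^sup>2 \<le> 2 * x\<^sup>2 + 2 * real N ^ 2 * S\<^sup>2" if "n \<in> {1..N}" for n
  proof -
    have "cmod (a n n) \<le> x + real N * S"
      using diag_entry_bound[OF assms(1-4) that] unfolding x_def S_def Q_def .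
    then have "(cmod (a n n))\<^sup>2 \<le> (x + real N * S)\<^sup>2" by (rule power_mono) simp
    also have "\<dots> \<le> 2 * x\<^sup>2 + 2 * (real N * S)\<^sup>2"
      by (smt (verit) power2_sum sum_squares_ge_zero power2_diff zero_le_power2)
    finally show ?thesis by (simp add: power_mult_distrib)
  qed
  then have "(\<Sum>n\<in>{1..N}. (cmod (a n n))\<^sup>2) \<le> real N * (2 * x\<^sup>2 + 2 * real N ^ 2 * S\<^sup>2)"
    using sum_bounded_above[of "{1..N}" "\<lambda>n. (cmod (a n n))\<^sup>2"] by simp
  also have "\<dots> \<le> real N * (2 * x\<^sup>2 + 2 * real N ^ 2 * (2 * offdiag_sq N ?la + 2 * Q\<^sup>2 * offdiag_sq N a))"
    using S2 by (intro mult_left_mono add_left_mono) auto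
  finally show ?thesis unfolding x_def by (simp add: algebra_simps power3_eq_cube power2_eq_square)
qed

lemma lind_coercive:
  assumes "N \<ge> 2" "zl > 0" "zr \<ge> 0" "\<beta> > 0"
  shows "\<exists>C>0. \<forall>a. frob_sq N a
    \<le> C * (dissipation N zl zr \<beta> a + dissipation N zl zr \<beta> (lind N v zl zr \<beta> a))"
proof -
  define Q where "Q = 2 * real N * (1 + (\<Sum>n\<in>{1..N}. \<bar>v n\<bar>)) + 2 * (zl + zr) + \<beta>"
  define C where "C = (1 + 4 * real N ^ 3 * Q\<^sup>2 + 4 * real N ^ 3) / \<beta> + real N / zl"
  have "C > 0" unfolding C_def using assms by (intro add_pos_pos divide_pos_pos add_pos_nonneg) auto
  moreover have "frob_sq N a \<le> C * (dissipation N zl zr \<beta> a + dissipation N zl zr \<beta> (lind N v zl zr \<beta> a))" for a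
  proof -
    let ?la = "lind N v zl zr \<beta> a" and ?D = "dissipation N zl zr \<beta>"
    have "offdiag_sq N a \<le> ?D a / \<beta>" "offdiag_sq N ?la \<le> ?D ?la / \<beta>"
      using dissipation_ge_offdiag[of zl zr \<beta> N] assms by (simp_all add: field_simps)
    moreover have "(cmod (a 1 1))\<^sup>2 \<le> ?D a / (2 * zl)"
      using dissipation_ge_corner[of zl zr \<beta> N a] assms by (simp add: field_simps)
    moreover note frob_sq_split[of N a]
      diag_sq_sum_bound[of zl zr \<beta> N v _ a, OF _ _ _ hmat_entry_bound, folded Q_def]
    ultimately have "frob_sq N a \<le> ?D a / \<beta> + 2 * real N * (?D a / (2 * zl))
        + 4 * real N ^ 3 * (?D ?la / \<beta>) + 4 * real N ^ 3 * Q\<^sup>2 * (?D a / \<beta>)"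
      using assms by (smt (verit) mult_left_mono zero_le_power of_nat_0_le_iff
          zero_le_power2 mult_nonneg_nonneg zero_le_numeral)
    also have "\<dots> = ((1 + 4 * real N ^ 3 * Q\<^sup>2) / \<beta> + real N / zl) * ?D a + (4 * real N ^ 3 / \<beta>) * ?D ?la"
      using assms by (simp add: field_simps)
    also have "\<dots> \<le> C * ?D a + C * ?D ?la"
      unfolding C_def using assms dissipation_nonneg[of zl zr \<beta>]
      by (intro add_mono mult_right_mono) (auto simp: add_divide_distrib)
    finally show ?thesis by (simp add: distrib_left)
  qed
  ultimately show ?thesis by blast
qed

section \<open>Exponential decay of the semigroup\<close>

lemma lind_bounded: "\<exists>K\<ge>0. \<forall>a. frob_sq N (lind N v zl zr \<beta> a) \<le> K * frob_sq N a"
proof (intro exI conjI allI)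
  let ?W = "\<lambda>i j. \<Sum>k\<in>{1..N}. \<Sum>m\<in>{1..N}. cmod (lind N v zl zr \<beta> (unit_mat k m) i j)"
  show "0 \<le> (\<Sum>i\<in>{1..N}. \<Sum>j\<in>{1..N}. (?W i j)\<^sup>2)" by (intro sum_nonneg) auto
  fix a
  have "(cmod (lind N v zl zr \<beta> a i j))\<^sup>2 \<le> (?W i j)\<^sup>2 * frob_sq N a"
    if ij: "i \<in> {1..N}" "j \<in> {1..N}" for i j
  proof -
    have "cmod (lind N v zl zr \<beta> a i j) \<le> sqrt (frob_sq N a) * ?W i j"
      unfolding lind_unit_mat_expansion[OF ij, of v zl zr \<beta> a] sum_distrib_left
      by (intro sum_norm_le sum_mono)
        (auto simp: norm_mult intro!: mult_right_mono entry_le_sqrt_frob_sq)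
    then have "(cmod (lind N v zl zr \<beta> a i j))\<^sup>2 \<le> (sqrt (frob_sq N a) * ?W i j)\<^sup>2"
      by (rule power_mono) simp
    then show ?thesis using frob_sq_nonneg[of N a] by (simp add: power_mult_distrib mult.commute)
  qed
  then show "frob_sq N (lind N v zl zr \<beta> a) \<le> (\<Sum>i\<in>{1..N}. \<Sum>j\<in>{1..N}. (?W i j)\<^sup>2) * frob_sq N a"
    unfolding frob_sq_def[of N "lind N v zl zr \<beta> a"] sum_distrib_right
    by (intro sum_mono) (simp add: frob_sq_def)
qed

lemma lind_power_entry_bound:
  "\<exists>K\<ge>0. \<forall>k b i j. i \<in> {1..N} \<longrightarrow> j \<in> {1..N} \<longrightarrow>
     cmod ((lind N v zl zr \<beta> ^^ k) b i j) \<le> sqrt (frob_sq N b) * K ^ k"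
proof -
  obtain K where K: "K \<ge> 0" "\<And>a. frob_sq N (lind N v zl zr \<beta> a) \<le> K * frob_sq N a"
    using lind_bounded by blast
  have pow: "frob_sq N ((lind N v zl zr \<beta> ^^ k) b) \<le> K ^ k * frob_sq N b" for k b
  proof (induction k)
    case (Suc k)
    have "frob_sq N ((lind N v zl zr \<beta> ^^ Suc k) b) \<le> K * frob_sq N ((lind N v zl zr \<beta> ^^ k) b)"
      using K(2) by simp
    also have "\<dots> \<le> K * (K ^ k * frob_sq N b)" by (rule mult_left_mono[OF Suc K(1)])
    finally show ?case by simp
  qed simp
  have "cmod ((lind N v zl zr \<beta> ^^ k) b i j) \<le> sqrt (frob_sq N b) * sqrt K ^ k"
    if "i \<in> {1..N}" "j \<in> {1..N}" for k b i j
  proof -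
    have "cmod ((lind N v zl zr \<beta> ^^ k) b i j) \<le> sqrt (frob_sq N ((lind N v zl zr \<beta> ^^ k) b))"
      by (rule entry_le_sqrt_frob_sq[OF that])
    also have "\<dots> \<le> sqrt (K ^ k * frob_sq N b)" by (rule real_sqrt_le_mono[OF pow])
    finally show ?thesis by (simp add: real_sqrt_mult real_sqrt_power mult.commute)
  qed
  then show ?thesis by (intro exI[of _ "sqrt K"]) (auto simp: K(1))
qed

lemma expL_coeff_summable:
  assumes "i \<in> {1..N}" "j \<in> {1..N}"
  shows "summable (\<lambda>k. (lind N v zl zr \<beta> ^^ k) b i j / of_real (fact k) * z ^ k)"
proof -
  obtain K where K: "K \<ge> 0" "\<And>k. cmod ((lind N v zl zr \<beta> ^^ k) b i j) \<le> sqrt (frob_sq N b) * K ^ k"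
    using lind_power_entry_bound[of N v zl zr \<beta>] assms by blast
  show ?thesis
  proof (rule summable_comparison_test')
    show "summable (\<lambda>k. sqrt (frob_sq N b) * (inverse (fact k) * (K * cmod z) ^ k))"
      by (intro summable_mult summable_exp)
    fix k
    have "cmod ((lind N v zl zr \<beta> ^^ k) b i j / of_real (fact k) * z ^ k)
        = cmod ((lind N v zl zr \<beta> ^^ k) b i j) * cmod z ^ k / fact k"
      by (simp add: norm_mult norm_divide norm_power)
    also have "\<dots> \<le> sqrt (frob_sq N b) * K ^ k * cmod z ^ k / fact k"
      by (intro divide_right_mono mult_right_mono K(2)) auto
    finally show "norm ((lind N v zl zr \<beta> ^^ k) b i j / of_real (fact k) * z ^ k)
        \<le> sqrt (frob_sq N b) * (inverse (fact k) * (K * cmod z) ^ k)"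
      by (simp add: field_simps power_mult_distrib)
  qed
qed

lemma expL_eq_power_series:
  "expL N v zl zr \<beta> s b i j = (\<Sum>k. (lind N v zl zr \<beta> ^^ k) b i j / of_real (fact k) * of_real s ^ k)"
  unfolding expL_def by (intro suminf_cong) (simp add: field_simps)

lemma expL_zero: "expL N v zl zr \<beta> 0 b i j = b i j"
  unfolding expL_eq_power_series using powser_zero[of "\<lambda>k. (lind N v zl zr \<beta> ^^ k) b i j / of_real (fact k)"]
  by simp

lemma expL_has_vector_derivative:
  assumes ij: "i \<in> {1..N}" "j \<in> {1..N}"
  shows "((\<lambda>s. expL N v zl zr \<beta> s b i j) has_vector_derivative
            lind N v zl zr \<beta> (expL N v zl zr \<beta> s b) i j) (at s within X)"
proof -
  let ?L = "lind N v zl zr \<beta>"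
  let ?c = "\<lambda>k. (?L ^^ k) b i j / of_real (fact k)"
  have D: "((\<lambda>z. \<Sum>k. ?c k * z ^ k) has_field_derivative (\<Sum>k. diffs ?c k * of_real s ^ k)) (at (of_real s))"
    by (rule termdiffs_strong_converges_everywhere) (rule expL_coeff_summable[OF ij])
  have "(\<Sum>k. diffs ?c k * of_real s ^ k) = (\<Sum>k. ?L (\<lambda>k' m. of_real (s ^ k / fact k) * (?L ^^ k) b k' m) i j)"
  proof (intro suminf_cong)
    fix k
    have "(fact (Suc k) :: complex) = of_nat (Suc k) * fact k" by (rule fact_Suc)
    moreover have "(fact k :: complex) \<noteq> 0" "(of_nat (Suc k) :: complex) \<noteq> 0"
      by (auto simp del: of_nat_Suc)
    ultimately show "diffs ?c k * of_real s ^ k = ?L (\<lambda>k' m. of_real (s ^ k / fact k) * (?L ^^ k) b k' m) i j"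
      unfolding lind_scale[OF ij] diffs_def by (simp add: field_simps del: of_nat_Suc)
  qed
  also have "\<dots> = ?L (expL N v zl zr \<beta> s b) i j"
    unfolding expL_def using expL_coeff_summable[of _ N _ v zl zr \<beta> b "of_real s"]
    by (subst lind_suminf[OF ij]) (auto simp: field_simps)
  finally show ?thesis
    using has_vector_derivative_real_field[OF D] unfolding expL_eq_power_series by simp
qed

lemma has_real_derivative_cmod_sq:
  fixes g :: "real \<Rightarrow> complex"
  assumes "(g has_vector_derivative g') (at s)"
  shows "((\<lambda>s. (cmod (g s))\<^sup>2) has_real_derivative 2 * Re (cnj (g s) * g')) (at s)"
proof -
  have "((\<lambda>s. g s \<bullet> g s) has_derivative (\<lambda>h. g s \<bullet> (h *\<^sub>R g') + (h *\<^sub>R g') \<bullet> g s)) (at s)"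
    using assms unfolding has_vector_derivative_def by (intro derivative_eq_intros) auto
  moreover have "(\<lambda>h. g s \<bullet> (h *\<^sub>R g') + (h *\<^sub>R g') \<bullet> g s) = (*) (2 * Re (cnj (g s) * g'))"
    by (auto simp: fun_eq_iff inner_complex_def algebra_simps)
  ultimately show ?thesis
    unfolding has_field_derivative_def power2_norm_eq_inner by simp
qed

lemma frob_sq_has_real_derivative:
  assumes "\<And>k m. k \<in> {1..N} \<Longrightarrow> m \<in> {1..N} \<Longrightarrow> ((\<lambda>s. f s k m) has_vector_derivative f' k m) (at s)"
  shows "((\<lambda>s. frob_sq N (f s)) has_real_derivative 2 * Re (frob_inner N (f s) f')) (at s)"
proof -
  have "((\<lambda>s. \<Sum>i\<in>{1..N}. \<Sum>j\<in>{1..N}. (cmod (f s i j))\<^sup>2) has_real_derivative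
     (\<Sum>i\<in>{1..N}. \<Sum>j\<in>{1..N}. 2 * Re (cnj (f s i j) * f' i j))) (at s)"
    by (intro DERIV_sum has_real_derivative_cmod_sq assms) auto
  then show ?thesis unfolding frob_sq_def frob_inner_def by (simp add: Re_sum sum_distrib_left)
qed

lemma exp_decay_of_deriv_bound:
  fixes f :: "real \<Rightarrow> real"
  assumes "\<And>t. (f has_real_derivative f' t) (at t)" "\<And>t. f' t \<le> - \<omega> * f t" "s \<ge> 0"
  shows "f s \<le> f 0 * exp (- \<omega> * s)"
proof -
  have "exp (\<omega> * s) * f s \<le> exp (\<omega> * 0) * f 0"
  proof (rule DERIV_nonpos_imp_nonincreasing[OF assms(3)])
    fix t
    have "((\<lambda>t. exp (\<omega> * t) * f t) has_real_derivative exp (\<omega> * t) * (\<omega> * f t + f' t)) (at t)"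
      using assms(1) by (auto intro!: derivative_eq_intros simp: algebra_simps)
    moreover have "exp (\<omega> * t) * (\<omega> * f t + f' t) \<le> 0"
      using assms(2)[of t] by (simp add: mult_nonneg_nonpos)
    ultimately show "\<exists>y. ((\<lambda>t. exp (\<omega> * t) * f t) has_real_derivative y) (at t) \<and> y \<le> 0" by blast
  qed
  then show ?thesis by (simp add: exp_minus field_simps)
qed

text \<open>The dissipation of a does not control the diagonal of a; this is why the energy also
  contains L e^{sL} b (see lind_coercive).\<close>

definition lind_energy :: "nat \<Rightarrow> (nat \<Rightarrow> real) \<Rightarrow> real \<Rightarrow> real \<Rightarrow> real \<Rightarrow> cmat \<Rightarrow> real \<Rightarrow> real" where
  "lind_energy N v zl zr \<beta> b s =
     frob_sq N (expL N v zl zr \<beta> s b) + frob_sq N (lind N v zl zr \<beta> (expL N v zl zr \<beta> s b))"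

lemma lind_energy_has_real_derivative:
  "(lind_energy N v zl zr \<beta> b has_real_derivative
      - 2 * dissipation N zl zr \<beta> (expL N v zl zr \<beta> s b)
      - 2 * dissipation N zl zr \<beta> (lind N v zl zr \<beta> (expL N v zl zr \<beta> s b))) (at s)"
proof -
  let ?F = "expL N v zl zr \<beta> s b" and ?L = "lind N v zl zr \<beta>"
  have "(lind_energy N v zl zr \<beta> b has_real_derivative
      2 * Re (frob_inner N ?F (?L ?F)) + 2 * Re (frob_inner N (?L ?F) (?L (?L ?F)))) (at s)"
    unfolding lind_energy_def[abs_def]
    by (intro DERIV_add frob_sq_has_real_derivative expL_has_vector_derivative
        lind_has_vector_derivative)
  then show ?thesis unfolding Re_frob_inner_lind by simp
qed

lemma lind_energy_decay:
  assumes "N \<ge> 2" "zl > 0" "zr \<ge> 0" "\<beta> > 0"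
  shows "\<exists>\<omega>>0. \<forall>b s. s \<ge> 0 \<longrightarrow> lind_energy N v zl zr \<beta> b s \<le> lind_energy N v zl zr \<beta> b 0 * exp (- \<omega> * s)"
proof -
  obtain K where K: "K \<ge> 0" "\<And>a. frob_sq N (lind N v zl zr \<beta> a) \<le> K * frob_sq N a"
    using lind_bounded by blast
  obtain C where C: "C > 0" "\<And>a. frob_sq N a
      \<le> C * (dissipation N zl zr \<beta> a + dissipation N zl zr \<beta> (lind N v zl zr \<beta> a))"
    using lind_coercive[OF assms, of v] by blast
  define \<omega> where "\<omega> = 2 / ((1 + K) * C)"
  have "\<omega> > 0" unfolding \<omega>_def using K C by simp
  moreover have "lind_energy N v zl zr \<beta> b s \<le> lind_energy N v zl zr \<beta> b 0 * exp (- \<omega> * s)"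
    if "s \<ge> 0" for b s
  proof (rule exp_decay_of_deriv_bound[OF lind_energy_has_real_derivative _ that])
    fix t
    let ?F = "expL N v zl zr \<beta> t b" and ?L = "lind N v zl zr \<beta>"
    have "lind_energy N v zl zr \<beta> b t \<le> (1 + K) * frob_sq N ?F"
      unfolding lind_energy_def using K(2)[of ?F] by (simp add: algebra_simps)
    also have "\<dots> \<le> (1 + K) * C * (dissipation N zl zr \<beta> ?F + dissipation N zl zr \<beta> (?L ?F))"
      using C(2)[of ?F] K(1) by (simp add: mult.assoc mult_left_mono)
    finally have "\<omega> * lind_energy N v zl zr \<beta> b t
        \<le> \<omega> * ((1 + K) * C * (dissipation N zl zr \<beta> ?F + dissipation N zl zr \<beta> (?L ?F)))"
      using \<open>\<omega> > 0\<close> by (intro mult_left_mono) auto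
    also have "\<dots> = 2 * (dissipation N zl zr \<beta> ?F + dissipation N zl zr \<beta> (?L ?F))"
      unfolding \<omega>_def using K(1) C(1) by simp
    finally show "- 2 * dissipation N zl zr \<beta> ?F - 2 * dissipation N zl zr \<beta> (?L ?F)
        \<le> - \<omega> * lind_energy N v zl zr \<beta> b t"
      by simp
  qed
  ultimately show ?thesis by blast
qed

lemma expL_entry_decay:
  assumes "N \<ge> 2" "zl > 0" "zr \<ge> 0" "\<beta> > 0"
  obtains c M :: real where "c > 0"
    "\<And>s i j. (s::real) \<ge> 0 \<Longrightarrow> i \<in> {1..N} \<Longrightarrow> j \<in> {1..N} \<Longrightarrow>
       cmod (expL N v zl zr \<beta> s b i j) \<le> M * exp (- c * s)"
    "\<And>s i j. (s::real) \<ge> 0 \<Longrightarrow> i \<in> {1..N} \<Longrightarrow> j \<in> {1..N} \<Longrightarrow>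
       cmod (lind N v zl zr \<beta> (expL N v zl zr \<beta> s b) i j) \<le> M * exp (- c * s)"
proof -
  let ?E = "lind_energy N v zl zr \<beta> b"
  obtain \<omega> where \<omega>: "\<omega> > 0" "\<And>s. s \<ge> 0 \<Longrightarrow> ?E s \<le> ?E 0 * exp (- \<omega> * s)"
    using lind_energy_decay[OF assms, of v] by blast
  have sqrt_bound: "cmod z \<le> sqrt (?E 0) * exp (- (\<omega> / 2) * s)"
    if "s \<ge> 0" "(cmod z)\<^sup>2 \<le> ?E s" for z and s :: real
  proof -
    have "exp (- \<omega> * s) = (exp (- (\<omega> / 2) * s))\<^sup>2"
      by (simp add: power2_eq_square exp_add[symmetric])
    then have "sqrt (?E 0 * exp (- \<omega> * s)) = sqrt (?E 0) * exp (- (\<omega> / 2) * s)"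
      by (simp add: real_sqrt_mult)
    moreover have "(cmod z)\<^sup>2 \<le> ?E 0 * exp (- \<omega> * s)" using that \<omega>(2) by fastforce
    ultimately show ?thesis by (metis real_le_rsqrt)
  qed
  show ?thesis
  proof (rule that[of "\<omega> / 2" "sqrt (?E 0)"])
    fix s :: real and i j assume s: "s \<ge> 0" and ij: "i \<in> {1..N}" "j \<in> {1..N}"
    let ?F = "expL N v zl zr \<beta> s b"
    have "(cmod (?F i j))\<^sup>2 \<le> ?E s" "(cmod (lind N v zl zr \<beta> ?F i j))\<^sup>2 \<le> ?E s"
      unfolding lind_energy_def using entry_sq_le_frob_sq[OF ij] frob_sq_nonneg
      by (smt (verit))+
    then show "cmod (?F i j) \<le> sqrt (?E 0) * exp (- (\<omega> / 2) * s)"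
      and "cmod (lind N v zl zr \<beta> ?F i j) \<le> sqrt (?E 0) * exp (- (\<omega> / 2) * s)"
      using sqrt_bound[OF s] by auto
  qed (use \<omega> in simp)
qed

lemma integrable_on_exp_decay:
  fixes f :: "real \<Rightarrow> complex"
  assumes "continuous_on {c..} f" "a > 0" "\<And>s. s \<ge> c \<Longrightarrow> norm (f s) \<le> M * exp (- a * s)"
  shows "f integrable_on {c..}"
proof (rule measurable_bounded_by_integrable_imp_integrable)
  show "f \<in> borel_measurable (lebesgue_on {c..})"
    by (rule continuous_imp_measurable_on_sets_lebesgue[OF assms(1)]) simp
  show "(\<lambda>s. M * exp (- a * s)) integrable_on {c..}"
    using integrable_on_exp_minus_to_infinity[OF assms(2)] by (rule integrable_on_mult_right)
qed (use assms(3) in auto)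

lemma le_zero_of_le_exp_decay:
  fixes x A c :: real
  assumes "c > 0" "\<And>T. T \<ge> 0 \<Longrightarrow> x \<le> A * exp (- c * T)"
  shows "x \<le> 0"
proof -
  have "((\<lambda>T. A * exp (- c * T)) \<longlongrightarrow> A * 0) at_top"
    using assms(1)
    by (intro tendsto_intros filterlim_compose[OF exp_at_bot] filterlim_tendsto_neg_mult_at_bot
        filterlim_ident) auto
  moreover have "eventually (\<lambda>T. x \<le> A * exp (- c * T)) at_top"
    using eventually_ge_at_top[of "0::real"] by eventually_elim (rule assms(2))
  ultimately show ?thesis by (metis tendsto_le[OF trivial_limit_at_top_linorder _ tendsto_const] mult_zero_right)
qed

lemma integral_derivative_exp_decay:
  fixes f f' :: "real \<Rightarrow> complex"
  assumes deriv: "\<And>s. (f has_vector_derivative f' s) (at s)" and "continuous_on {0..} f'" "c > 0"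
    and decay: "\<And>s. s \<ge> 0 \<Longrightarrow> norm (f s) \<le> M * exp (- c * s)"
      "\<And>s. s \<ge> 0 \<Longrightarrow> norm (f' s) \<le> M * exp (- c * s)"
  shows "integral {0..} f' = - f 0"
proof -
  have integrable: "f' integrable_on {T..}" if "T \<ge> 0" for T
    using that decay(2)
    by (intro integrable_on_exp_decay[where M = M, OF continuous_on_subset[OF assms(2)] \<open>c > 0\<close>]) auto
  have "norm (integral {0..} f' + f 0) \<le> (M + M / c) * exp (- c * T)" if T: "T \<ge> 0" for T
  proof -
    have "(f' has_integral (f T - f 0)) {0..T}"
      by (rule fundamental_theorem_of_calculus[OF T]) (rule has_vector_derivative_at_within[OF deriv])
    moreover have "(f' has_integral integral {T..} f') {T..}"
      using integrable[OF T] by blast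
    ultimately have "(f' has_integral ((f T - f 0) + integral {T..} f')) ({0..T} \<union> {T..})"
      by (rule has_integral_Un) (use T in \<open>auto intro: negligible_subset[of "{T}"]\<close>)
    moreover have "{0..T} \<union> {T..} = {0..}" using T by auto
    ultimately have "integral {0..} f' + f 0 = f T + integral {T..} f'"
      by (simp add: integral_unique)
    moreover have "norm (integral {T..} f') \<le> integral {T..} (\<lambda>s. M * exp (- c * s))"
      using T decay(2) \<open>c > 0\<close>
      by (intro integral_norm_bound_integral integrable[OF T]
          integrable_on_mult_right integrable_on_exp_minus_to_infinity) auto
    moreover have "integral {T..} (\<lambda>s. M * exp (- c * s)) = M / c * exp (- c * T)"
      using has_integral_mult_right[OF has_integral_exp_minus_to_infinity[OF \<open>c > 0\<close>, of T], of M]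
      by (auto dest: integral_unique)
    ultimately show ?thesis
      using norm_triangle_ineq[of "f T" "integral {T..} f'"] decay(1)[OF T]
      by (simp add: distrib_right)
  qed
  then have "norm (integral {0..} f' + f 0) \<le> 0"
    by (rule le_zero_of_le_exp_decay[OF \<open>c > 0\<close>])
  then show ?thesis by (simp add: add_eq_0_iff)
qed

lemma lind_integral_expL:
  assumes "N \<ge> 2" "zl > 0" "zr \<ge> 0" "\<beta> > 0" and ij: "i \<in> {1..N}" "j \<in> {1..N}"
  shows "lind N v zl zr \<beta> (\<lambda>k m. integral {0..} (\<lambda>s. expL N v zl zr \<beta> s b k m)) i j = - b i j"
proof -
  let ?F = "\<lambda>s. expL N v zl zr \<beta> s b" and ?L = "lind N v zl zr \<beta>"
  obtain c M where c: "c > 0"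
    and decay: "\<And>s k m. s \<ge> 0 \<Longrightarrow> k \<in> {1..N} \<Longrightarrow> m \<in> {1..N} \<Longrightarrow> cmod (?F s k m) \<le> M * exp (- c * s)"
      "\<And>s k m. s \<ge> 0 \<Longrightarrow> k \<in> {1..N} \<Longrightarrow> m \<in> {1..N} \<Longrightarrow> cmod (?L (?F s) k m) \<le> M * exp (- c * s)"
    using expL_entry_decay[OF assms(1-4)] by metis
  have deriv: "((\<lambda>s. ?F s k m) has_vector_derivative ?L (?F s) k m) (at s within X)"
    "((\<lambda>s. ?L (?F s) k m) has_vector_derivative ?L (?L (?F s)) k m) (at s within X)"
    if "k \<in> {1..N}" "m \<in> {1..N}" for k m s X
    using that by (auto intro!: expL_has_vector_derivative lind_has_vector_derivative)
  have "(\<lambda>s. ?F s k m) integrable_on {0..}" if "k \<in> {1..N}" "m \<in> {1..N}" for k m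
    using that decay(1)
    by (intro integrable_on_exp_decay[OF continuous_on_vector_derivative c]) (auto intro: deriv)
  then have "?L (\<lambda>k m. integral {0..} (\<lambda>s. ?F s k m)) i j = integral {0..} (\<lambda>s. ?L (?F s) i j)"
    by (rule lind_integral[OF ij])
  also have "\<dots> = - ?F 0 i j"
  proof (rule integral_derivative_exp_decay[OF deriv(1)[OF ij] _ c])
    show "continuous_on {0..} (\<lambda>s. ?L (?F s) i j)"
      by (rule continuous_on_vector_derivative[OF deriv(2)[OF ij]])
  qed (use decay ij in blast)+
  finally show ?thesis by (simp add: expL_zero)
qed

section \<open>The stationary state without potential\<close>

definition current_state :: "(nat \<Rightarrow> real) \<Rightarrow> real \<Rightarrow> cmat" where
  "current_state r J = (\<lambda>i j. if i = j then complex_of_real (r i)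
     else if i = j + 1 then \<i> * complex_of_real (J / 2)
     else if j = i + 1 then - \<i> * complex_of_real (J / 2) else 0)"

lemma lind_free_entry:
  assumes "i \<in> {1..N}" "j \<in> {1..N}"
  shows "lind N (\<lambda>_. 0) zl zr \<beta> a i j = - \<i> * (- (if 2 \<le> i then a (i-1) j else 0)
        - (if i+1 \<le> N then a (i+1) j else 0) + (if 2 \<le> j then a i (j-1) else 0)
        + (if j+1 \<le> N then a i (j+1) else 0))
      - complex_of_real (boundary_rate N zl zr i + boundary_rate N zl zr j) * a i j
      + complex_of_real \<beta> * ((if i = j then a i i else 0) - a i j)"
  unfolding lind_entry[OF assms] mmul_hmat_left[OF assms(1)] mmul_hmat_right[OF assms(2)] by simp

lemma lind_free_current_state_diag:
  assumes "N \<ge> 2" "i \<in> {1..N}"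
    and "2 * zl * r 1 = 2 * ail - J" "2 * zr * r N = J + 2 * air"
  shows "lind N (\<lambda>_. 0) zl zr \<beta> (current_state r J) i i
    = - (complex_of_real (2 * ail) * proj 1 i i + complex_of_real (2 * air) * proj N i i)"
proof -
  consider "i = 1" | "i = N" | "2 \<le> i" "i + 1 \<le> N" using assms(1,2) by force
  then show ?thesis
  proof cases
    case 1
    have "complex_of_real (2 * zl * r 1) = complex_of_real (2 * ail - J)" using assms(3) by simp
    then show ?thesis unfolding lind_free_entry[OF assms(2,2)] using 1 assms(1)
      by (simp add: current_state_def proj_def boundary_rate_def algebra_simps)
  next
    case 2
    have "complex_of_real (2 * zr * r N) = complex_of_real (J + 2 * air)" using assms(4) by simp
    then show ?thesis unfolding lind_free_entry[OF assms(2,2)] using 2 assms(1)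
      by (simp add: current_state_def proj_def boundary_rate_def algebra_simps) arith
  next
    case 3
    then show ?thesis unfolding lind_free_entry[OF assms(2,2)]
      by (simp add: current_state_def proj_def boundary_rate_def) arith
  qed
qed

lemma lind_free_current_state_bond:
  assumes "1 \<le> n" "n + 1 \<le> N"
    and "r (n + 1) - r n = - J / 2 * (\<beta> + boundary_rate N zl zr n + boundary_rate N zl zr (n + 1))"
  shows "lind N (\<lambda>_. 0) zl zr \<beta> (current_state r J) (n + 1) n = 0"
    and "lind N (\<lambda>_. 0) zl zr \<beta> (current_state r J) n (n + 1) = 0"
proof -
  have ij: "n \<in> {1..N}" "n + 1 \<in> {1..N}" using assms(1,2) by auto
  have "complex_of_real (r n)
      = complex_of_real (r (n + 1) + J * (\<beta> + boundary_rate N zl zr n + boundary_rate N zl zr (n + 1)) / 2)"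
    using assms(3) by (simp add: field_simps)
  then show "lind N (\<lambda>_. 0) zl zr \<beta> (current_state r J) (n + 1) n = 0"
    and "lind N (\<lambda>_. 0) zl zr \<beta> (current_state r J) n (n + 1) = 0"
    unfolding lind_free_entry[OF ij(2,1)] lind_free_entry[OF ij] using assms(1,2)
    by (simp_all add: current_state_def field_simps) arith+
qed

lemma lind_free_current_state:
  assumes "N \<ge> 2" and ij: "i \<in> {1..N}" "j \<in> {1..N}"
    and "2 * zl * r 1 = 2 * ail - J" "2 * zr * r N = J + 2 * air"
    and step: "\<And>n. 1 \<le> n \<Longrightarrow> n + 1 \<le> N \<Longrightarrow>
      r (n + 1) - r n = - J / 2 * (\<beta> + boundary_rate N zl zr n + boundary_rate N zl zr (n + 1))"
  shows "lind N (\<lambda>_. 0) zl zr \<beta> (current_state r J) i j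
    = - (complex_of_real (2 * ail) * proj 1 i j + complex_of_real (2 * air) * proj N i j)"
proof -
  let ?R = "current_state r J"
  consider "i = j" | "i = j + 1" | "j = i + 1" | "i = j + 2" | "j = i + 2"
    | "i \<noteq> j" "i \<noteq> j + 1" "j \<noteq> i + 1" "i \<noteq> j + 2" "j \<noteq> i + 2" by linarith
  then show ?thesis
  proof cases
    case 1
    then show ?thesis using lind_free_current_state_diag[OF assms(1,2,4,5)] by simp
  next
    case 2
    then show ?thesis using lind_free_current_state_bond(1)[OF _ _ step, of j] ij by (simp add: proj_def)
  next
    case 3
    then show ?thesis using lind_free_current_state_bond(2)[OF _ _ step, of i] ij by (simp add: proj_def)
  next
    case 4
    then show ?thesis unfolding lind_free_entry[OF ij] using ij
      by (simp add: current_state_def proj_def) arith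
  next
    case 5
    then show ?thesis unfolding lind_free_entry[OF ij] using ij
      by (simp add: current_state_def proj_def) arith
  next
    case 6
    then have "?R i j = 0" "?R (i+1) j = 0" "?R i (j+1) = 0"
      "2 \<le> i \<Longrightarrow> ?R (i-1) j = 0" "2 \<le> j \<Longrightarrow> ?R i (j-1) = 0"
      by (auto simp: current_state_def)
    moreover have "proj 1 i j = 0" "proj N i j = 0" using 6 by (auto simp: proj_def)
    ultimately show ?thesis unfolding lind_free_entry[OF ij] using 6 by simp
  qed
qed

definition free_current :: "nat \<Rightarrow> real \<Rightarrow> real \<Rightarrow> real \<Rightarrow> real \<Rightarrow> real \<Rightarrow> real" where
  "free_current N ail aol air aor \<beta> =
    (let zl = ail + aol; zr = air + aor
     in 2 * (ail * aor - aol * air) / (zl + zr + zl * zr * (zl + zr + \<beta> * (real N - 1))))"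

lemma current_state_diag_exists:
  assumes "N \<ge> 2" "ail + aol > 0" "air + aor > 0" "\<beta> \<ge> 0"
  defines "J \<equiv> free_current N ail aol air aor \<beta>" and "zl \<equiv> ail + aol" and "zr \<equiv> air + aor"
  obtains r where "2 * zl * r 1 = 2 * ail - J" "2 * zr * r N = J + 2 * air"
    "\<And>n. 1 \<le> n \<Longrightarrow> n + 1 \<le> N \<Longrightarrow>
      r (n + 1) - r n = - J / 2 * (\<beta> + boundary_rate N zl zr n + boundary_rate N zl zr (n + 1))"
proof
  \<comment> \<open>The densities drop linearly along the chain; free_current is exactly the current for which
    both boundary conditions can be met.\<close>
  define r where "r n = (2 * ail - J) / (2 * zl)
    - J / 2 * (\<beta> * (real n - 1) + (if 2 \<le> n then zl else 0) + (if n = N then zr else 0))" for n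
  have "zl > 0" "zr > 0" using assms(2,3) by (simp_all add: zl_def zr_def)
  then have "zl + zr + zl * zr * (zl + zr + \<beta> * (real N - 1)) > 0"
    using assms(1,4) by (intro add_pos_nonneg add_pos_pos mult_nonneg_nonneg add_nonneg_nonneg) auto
  then have consistent: "J * (zl + zr + zl * zr * (zl + zr + \<beta> * (real N - 1))) = 2 * (ail * zr - air * zl)"
    unfolding J_def free_current_def Let_def zl_def zr_def by (simp add: field_simps)
  show "2 * zl * r 1 = 2 * ail - J" using assms(1,2) by (simp add: r_def zl_def)
  show "2 * zr * r N = J + 2 * air"
    using assms(1-3) consistent unfolding r_def zl_def zr_def by (simp add: field_simps)
  show "r (n + 1) - r n = - J / 2 * (\<beta> + boundary_rate N zl zr n + boundary_rate N zl zr (n + 1))"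
    if "1 \<le> n" "n + 1 \<le> N" for n
    using that by (auto simp: r_def boundary_rate_def algebra_simps)
qed

section \<open>Perturbation by the potential\<close>

lemma offdiag_sq_le_of_lind_eq:
  assumes "zl \<ge> 0" "zr \<ge> 0" "\<beta> > 0"
    and LX: "\<And>i j. i \<in> {1..N} \<Longrightarrow> j \<in> {1..N} \<Longrightarrow> lind N v zl zr \<beta> X i j = Y i j"
    and Y_diag: "\<And>i. Y i i = 0"
  shows "\<beta>\<^sup>2 * offdiag_sq N X \<le> frob_sq N Y"
proof -
  have amgm: "cmod (X i j) * cmod (Y i j)
      \<le> \<beta> / 2 * (if i = j then 0 else (cmod (X i j))\<^sup>2) + (cmod (Y i j))\<^sup>2 / (2 * \<beta>)" for i j
  proof (cases "i = j")
    case False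
    have "0 \<le> (\<beta> * cmod (X i j) - cmod (Y i j))\<^sup>2" by simp
    then show ?thesis using False \<open>\<beta> > 0\<close> by (simp add: field_simps power2_eq_square)
  qed (simp add: Y_diag)
  have "\<beta> * offdiag_sq N X \<le> - Re (frob_inner N X (lind N v zl zr \<beta> X))"
    using dissipation_ge_offdiag[OF assms(1,2)] Re_frob_inner_lind by simp
  also have "\<dots> = - Re (frob_inner N X Y)"
    unfolding frob_inner_def using LX by simp
  also have "\<dots> \<le> (\<Sum>i\<in>{1..N}. \<Sum>j\<in>{1..N}. cmod (X i j) * cmod (Y i j))"
    unfolding frob_inner_def
    by (rule order_trans[OF abs_Re_le_cmod[THEN abs_le_D2] sum_norm_le[OF sum_norm_le]]) (simp add: norm_mult)
  also have "\<dots> \<le> \<beta> / 2 * offdiag_sq N X + frob_sq N Y / (2 * \<beta>)"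
    unfolding offdiag_sq_def frob_sq_def
    by (rule order_trans[OF sum_mono[OF sum_mono[OF amgm]]])
      (simp add: sum.distrib sum_distrib_left sum_divide_distrib)
  finally show ?thesis using \<open>\<beta> > 0\<close> by (simp add: field_simps power2_eq_square)
qed

lemma offdiag_entry_le_of_lind_eq:
  assumes "zl \<ge> 0" "zr \<ge> 0" "\<beta> > 0"
    and "\<And>i j. i \<in> {1..N} \<Longrightarrow> j \<in> {1..N} \<Longrightarrow> lind N v zl zr \<beta> X i j = Y i j"
    and "\<And>i. Y i i = 0" and "i \<in> {1..N}" "j \<in> {1..N}" "i \<noteq> j"
  shows "\<beta> * cmod (X i j) \<le> sqrt (frob_sq N Y)"
proof -
  have "(\<beta> * cmod (X i j))\<^sup>2 \<le> \<beta>\<^sup>2 * offdiag_sq N X"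
    unfolding power_mult_distrib using assms(6-8) by (intro mult_left_mono offdiag_entry_sq_le_offdiag_sq) auto
  also have "\<dots> \<le> frob_sq N Y" by (rule offdiag_sq_le_of_lind_eq[OF assms(1-5)])
  finally show ?thesis by (rule real_le_rsqrt)
qed

lemma frob_sq_potential_commutator_le:
  assumes "\<And>n. n \<in> {1..N} \<Longrightarrow> \<bar>v n\<bar> \<le> V"
  shows "frob_sq N (\<lambda>i j. \<i> * complex_of_real (v i - v j) * current_state r J i j) \<le> 2 * real N * (V * J)\<^sup>2"
proof -
  let ?Y = "\<lambda>i j. \<i> * complex_of_real (v i - v j) * current_state r J i j"
  have entry: "(cmod (?Y i j))\<^sup>2 \<le> (if j = i + 1 then (V * J)\<^sup>2 else 0) + (if j = i - 1 then (V * J)\<^sup>2 else 0)"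
    if "i \<in> {1..N}" "j \<in> {1..N}" for i j
  proof -
    have "\<bar>v i - v j\<bar> \<le> 2 * V" using assms[OF that(1)] assms[OF that(2)] by linarith
    then have "\<bar>v i - v j\<bar> * (\<bar>J\<bar> / 2) \<le> 2 * V * (\<bar>J\<bar> / 2)"
      by (rule mult_right_mono) simp
    then have "(\<bar>v i - v j\<bar> * (\<bar>J\<bar> / 2))\<^sup>2 \<le> (V * \<bar>J\<bar>)\<^sup>2"
      by (intro power_mono) auto
    then have "(\<bar>v i - v j\<bar> * (\<bar>J\<bar> / 2))\<^sup>2 \<le> (V * J)\<^sup>2"
      by (simp add: power_mult_distrib)
    then show ?thesis using that by (auto simp: current_state_def norm_mult simp flip: of_real_diff)
  qed
  have "frob_sq N ?Y \<le> (\<Sum>i\<in>{1..N}. \<Sum>j\<in>{1..N}.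
      (if j = i + 1 then (V * J)\<^sup>2 else 0) + (if j = i - 1 then (V * J)\<^sup>2 else 0))"
    unfolding frob_sq_def by (intro sum_mono entry)
  also have "\<dots> \<le> (\<Sum>i\<in>{1..N}. 2 * (V * J)\<^sup>2)"
    by (intro sum_mono) (simp add: sum.distrib sum.delta' sum_nonneg)
  finally show ?thesis by simp
qed

lemma Jcur_ge_free_current:
  assumes "N \<ge> 2" "ail + aol > 0" "air + aor > 0" "\<beta> > 0" "\<And>n. n \<in> {1..N} \<Longrightarrow> \<bar>v n\<bar> \<le> V"
  defines "J \<equiv> free_current N ail aol air aor \<beta>"
  shows "J - 2 * sqrt (2 * real N) * V * \<bar>J\<bar> / \<beta> \<le> Jcur N v ail aol air aor \<beta>"
proof -
  define zl zr where "zl = ail + aol" and "zr = air + aor"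
  have zl: "zl > 0" and zr: "zr > 0" using assms(2,3) by (simp_all add: zl_def zr_def)
  obtain r where left: "2 * zl * r 1 = 2 * ail - J" and right: "2 * zr * r N = J + 2 * air"
    and step: "\<And>n. 1 \<le> n \<Longrightarrow> n + 1 \<le> N \<Longrightarrow>
      r (n + 1) - r n = - J / 2 * (\<beta> + boundary_rate N zl zr n + boundary_rate N zl zr (n + 1))"
    using current_state_diag_exists[OF assms(1-3) less_imp_le[OF assms(4)]]
    unfolding J_def zl_def zr_def by blast
  define a0 where "a0 = (\<lambda>i j. complex_of_real (2 * ail) * proj 1 i j + complex_of_real (2 * air) * proj N i j)"
  define R where "R = (\<lambda>i j. integral {0..} (\<lambda>s. expL N v zl zr \<beta> s a0 i j))"
  define X where "X = (\<lambda>i j. R i j - current_state r J i j)"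
  define Y where "Y = (\<lambda>i j. \<i> * complex_of_real (v i - v j) * current_state r J i j)"
  have "lind N v zl zr \<beta> X i j = Y i j" if ij: "i \<in> {1..N}" "j \<in> {1..N}" for i j
    using lind_free_current_state[OF assms(1) ij left right step]
      lind_integral_expL[OF assms(1) zl less_imp_le[OF zr] assms(4) ij, of v a0]
    unfolding X_def lind_diff[OF ij] lind_potential_split[OF ij, of v _ _ _ "current_state r J"] R_def
    by (simp add: a0_def Y_def)
  then have "\<beta> * cmod (X 2 1) \<le> sqrt (frob_sq N Y)"
    using zl zr assms(1,4)
    by (intro offdiag_entry_le_of_lind_eq[where v = v and zl = zl and zr = zr]) (auto simp: Y_def)
  also have "\<dots> \<le> sqrt (2 * real N * (V * J)\<^sup>2)"
    unfolding Y_def by (intro real_sqrt_le_mono frob_sq_potential_commutator_le assms(5))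
  also have "\<dots> = sqrt (2 * real N) * V * \<bar>J\<bar>"
    using assms(1) assms(5)[of 1] by (simp add: real_sqrt_mult abs_mult)
  finally have "cmod (X 2 1) \<le> sqrt (2 * real N) * V * \<bar>J\<bar> / \<beta>"
    using assms(4) by (simp add: field_simps)
  moreover have "Rinf N v ail aol air aor \<beta> 2 1 = R 2 1"
    unfolding Rinf_def Let_def R_def a0_def zl_def zr_def ..
  then have "Jcur N v ail aol air aor \<beta> = J + 2 * Im (X 2 1)"
    unfolding Jcur_def X_def by (simp add: current_state_def)
  ultimately show ?thesis using abs_Im_le_cmod[of "X 2 1"] by linarith
qed

lemma abs_le_vnorm:
  assumes "bounded (range v)" "n \<ge> 1"
  shows "\<bar>v n\<bar> \<le> vnorm v"
proof -
  obtain B where "\<And>m. \<bar>v m\<bar> \<le> B" using assms(1) unfolding bounded_iff by auto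
  then have "bdd_above ((\<lambda>n. \<bar>v n\<bar>) ` {1..})" by (intro bdd_aboveI[of _ B]) blast
  then show ?thesis unfolding vnorm_def using assms(2) by (intro cSUP_upper) auto
qed

lemma Jcur_ge_free_current_dephasing:
  assumes "N \<ge> 2" "ail + aol > 0" "air + aor > 0" "\<epsilon> > 0" "\<And>n. n \<in> {1..N} \<Longrightarrow> \<bar>v n\<bar> \<le> V"
  defines "J \<equiv> free_current N ail aol air aor (\<epsilon> * real N)"
  shows "J - 2 * V * \<bar>J\<bar> / \<epsilon> \<le> Jcur N v ail aol air aor (\<epsilon> * real N)"
proof -
  have "sqrt (2 * real N) \<le> real N"
    using assms(1) by (intro real_le_lsqrt) (auto simp: power2_eq_square)
  moreover have "V \<ge> 0" using assms(1) assms(5)[of 1] by auto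
  ultimately have "2 * sqrt (2 * real N) * V * \<bar>J\<bar> / (\<epsilon> * real N) \<le> 2 * V * \<bar>J\<bar> / \<epsilon>"
    using assms(1,4) by (simp add: field_simps mult_left_mono mult_right_mono)
  with Jcur_ge_free_current[where v = v and V = V and \<beta> = "\<epsilon> * real N", OF assms(1-3) _ assms(5)]
  show ?thesis unfolding J_def using assms(1,4) by simp
qed

theorem mainTheorem16:
  fixes v :: "nat \<Rightarrow> real" and N :: nat and ail aol air aor \<epsilon> :: real
  assumes "bounded (range v)"
    and "N \<ge> 2"
    and "ail \<ge> 0" "aol \<ge> 0" "air \<ge> 0" "aor \<ge> 0"
    and "ail + aol > 0" "air + aor > 0"
    and "ail * aor - aol * air > 0"
    and "\<epsilon> > 4 * vnorm v * (3 + max (max (ail + aol) (air + aor)) 1)"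
  shows "Jcur N v ail aol air aor (\<epsilon> * real N)
           \<ge> 4 * (ail * aor - aol * air)
               / ((ail + aol) + (air + aor) + (ail + aol) * (air + aor)
                    * ((ail + aol) + (air + aor) + \<epsilon> * real N * (real N - 1)))
             * (1 / 2 - 2 * vnorm v * (3 + max (max (ail + aol) (air + aor)) 1) / \<epsilon>)
      \<and> 4 * (ail * aor - aol * air)
               / ((ail + aol) + (air + aor) + (ail + aol) * (air + aor)
                    * ((ail + aol) + (air + aor) + \<epsilon> * real N * (real N - 1)))
             * (1 / 2 - 2 * vnorm v * (3 + max (max (ail + aol) (air + aor)) 1) / \<epsilon>) > 0"
proof -
  define C' where "C' = 3 + max (max (ail + aol) (air + aor)) 1"
  define D where "D = ail * aor - aol * air"
  define den where "den = (ail + aol) + (air + aor) + (ail + aol) * (air + aor)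
    * ((ail + aol) + (air + aor) + \<epsilon> * real N * (real N - 1))"
  define J where "J = free_current N ail aol air aor (\<epsilon> * real N)"
  have V: "\<And>n. n \<in> {1..N} \<Longrightarrow> \<bar>v n\<bar> \<le> vnorm v" using abs_le_vnorm[OF assms(1)] by simp
  then have "vnorm v \<ge> 0" using assms(2) by force
  moreover have "C' \<ge> 4" unfolding C'_def by simp
  ultimately have C'_bound: "2 * vnorm v \<le> 4 * vnorm v * C'"
    using mult_left_mono[of 4 C' "4 * vnorm v"] by linarith
  have eps: "\<epsilon> > 4 * vnorm v * C'" "\<epsilon> > 0"
    using assms(10) C'_bound \<open>vnorm v \<ge> 0\<close> unfolding C'_def by linarith+
  have "den > 0" unfolding den_def
    by (rule add_pos_nonneg) (use assms(2-8) eps(2) in \<open>auto intro!: mult_nonneg_nonneg add_nonneg_nonneg\<close>)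
  have J_eq: "J = 2 * D / den" unfolding J_def free_current_def D_def den_def Let_def by (simp add: algebra_simps)
  then have "J > 0" using assms(9) \<open>den > 0\<close> unfolding D_def by simp
  then have "J - 4 * vnorm v * C' * J / \<epsilon> \<le> Jcur N v ail aol air aor (\<epsilon> * real N)"
    using Jcur_ge_free_current_dephasing[where v = v and V = "vnorm v", OF assms(2,7,8) eps(2) V]
      divide_right_mono[OF mult_right_mono[OF C'_bound], of J \<epsilon>] eps(2) unfolding J_def by simp
  moreover have "4 * D / den * (1 / 2 - 2 * vnorm v * C' / \<epsilon>) = J - 4 * vnorm v * C' * J / \<epsilon>"
    unfolding J_eq using eps(2) \<open>den > 0\<close> by (simp add: field_simps)
  moreover have "1 / 2 - 2 * vnorm v * C' / \<epsilon> > 0" using eps by (simp add: field_simps)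
  then have "4 * D / den * (1 / 2 - 2 * vnorm v * C' / \<epsilon>) > 0"
    using assms(9) \<open>den > 0\<close> unfolding D_def by simp
  ultimately show ?thesis unfolding C'_def D_def den_def by simp
qed

end
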